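(* Let $K\le M$ be positive integers, $P>0$, and let $\mathbf{H}\in\mathbb{C}^{K\times M}$ have i.i.d. circularly-symmetric complex Gaussian entries with zero mean and unit variance. Let $\mathbf{F}=\mathbf{H}^*(\mathbf{H}\mathbf{H}^* )^{-1}=[\mathbf{f}_1,\dots,\mathbf{f}_K]$. Then $$\mathbb{E}\left[\sum_{k=1}^{K}\log_2\!\left(1+\frac{P}{K\|\mathbf{f}_k\|^2}\right)\right]\le K\log_2\!\left(1+\frac{P(M-K+1)}{K}\right).$$
   Context: The left-hand side is the ergodic downlink sum rate of zero-forcing precoding with vector normalization (beamformers $\mathbf{f}_k/(\sqrt{K}\|\mathbf{f}_k\|)$, total transmit power $P$, unit noise variance), since with ZF the interference vanishes and the received signal power of user $k$ is $P/(K\|\mathbf{f}_k\|^2)$. *)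

theory Defs
  imports "HOL-Probability.Probability" "Jordan_Normal_Form.Gauss_Jordan_Elimination"
    "Jordan_Normal_Form.Schur_Decomposition"
begin

text \<open>Circularly-symmetric complex Gaussian CN(0,1): real and imaginary parts
  independent real normals with mean 0 and variance 1/2 (standard deviation sqrt(1/2)).\<close>
definition complex_gaussian :: "complex measure" where
  "complex_gaussian =
     distr (density lborel (normal_density 0 (sqrt (1/2)))
            \<Otimes>\<^sub>M density lborel (normal_density 0 (sqrt (1/2))))
           borel (\<lambda>(x, y). Complex x y)"

definition channel_measure :: "nat \<Rightarrow> nat \<Rightarrow> (nat \<times> nat \<Rightarrow> complex) measure" where
  "channel_measure K M = PiM ({..<K} \<times> {..<M}) (\<lambda>_. complex_gaussian)"

definition channel_mat :: "nat \<Rightarrow> nat \<Rightarrow> (nat \<times> nat \<Rightarrow> complex) \<Rightarrow> complex mat" where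
  "channel_mat K M h = mat K M (\<lambda>(i, j). h (i, j))"

definition zf_precoder :: "complex mat \<Rightarrow> complex mat" where
  "zf_precoder H = mat_adjoint H * the (mat_inverse (H * mat_adjoint H))"

definition vec_norm_sq :: "complex vec \<Rightarrow> real" where
  "vec_norm_sq v = (\<Sum>j<dim_vec v. (cmod (v $ j))\<^sup>2)"

end

theory Submission
  imports Defs
begin

text \<open>Let \<open>h\<^sub>k\<close> be the \<open>k\<close>-th row of \<open>H\<close> and \<open>f\<^sub>k\<close> the \<open>k\<close>-th column of \<open>F\<close>. Since
  \<open>H F = I\<close>, the vector \<open>f\<^sub>k\<close> is orthogonal to the other \<open>K - 1\<close> rows and has inner product \<open>1\<close>
  with \<open>h\<^sub>k\<close>. With \<open>\<Pi>\<^sub>k\<close> the orthogonal projector onto the span of the other (conjugated) rows,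
  Cauchy-Schwarz gives \<open>1 \<le> \<parallel>(I - \<Pi>\<^sub>k) h\<^sub>k\<^sup>*\<parallel>\<^sup>2 \<parallel>f\<^sub>k\<parallel>\<^sup>2\<close>. Conditionally on the other rows,
  \<open>h\<^sub>k\<close> is standard Gaussian and independent, so the expectation of \<open>\<parallel>(I - \<Pi>\<^sub>k) h\<^sub>k\<^sup>*\<parallel>\<^sup>2\<close> is
  \<open>\<parallel>I - \<Pi>\<^sub>k\<parallel>\<^sub>F\<^sup>2 = M - K + 1\<close>, the other rows being almost surely linearly independent. Finally
  \<open>x \<mapsto> log\<^sub>2 (1 + c x)\<close> is concave: bounding it by its tangent at \<open>x = M - K + 1\<close> and taking
  expectations yields the claim.\<close>

section \<open>The complex Gaussian distribution\<close>

abbreviation normal_half :: "real measure" where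
  "normal_half \<equiv> density lborel (normal_density 0 (sqrt (1/2)))"

lemma prob_space_normal_half: "prob_space normal_half"
  by (rule prob_space_normal_density) simp

lemma sets_normal_half [measurable_cong]: "sets normal_half = sets borel"
  by simp

lemma measurable_Complex_normal_half [measurable]:
  "(\<lambda>(x, y). Complex x y) \<in> borel_measurable (normal_half \<Otimes>\<^sub>M normal_half)"
proof -
  have "(\<lambda>p. complex_of_real (fst p) + \<i> * complex_of_real (snd p))
          \<in> borel_measurable (normal_half \<Otimes>\<^sub>M normal_half)"
    by measurable
  then show ?thesis
    by (simp add: case_prod_beta Complex_eq)
qed

lemma prob_space_complex_gaussian: "prob_space complex_gaussian"
  unfolding complex_gaussian_def
  by (intro prob_space.prob_space_distr prob_space_pair prob_space_normal_half)
     (rule measurable_Complex_normal_half)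

lemma space_complex_gaussian [simp]: "space complex_gaussian = UNIV"
  by (simp add: complex_gaussian_def)

lemma sets_complex_gaussian: "sets complex_gaussian = sets borel"
  by (simp add: complex_gaussian_def)

lemma emeasure_normal_half_singleton: "emeasure normal_half {a} = 0"
proof -
  have "AE x in lborel. x \<in> {a} \<longrightarrow> normal_density 0 (sqrt (1/2)) x = 0"
    by (rule eventually_mono[OF AE_lborel_singleton[of a]]) simp
  then have "{a} \<in> null_sets normal_half"
    by (subst null_sets_density_iff) auto
  then show ?thesis by auto
qed

lemma emeasure_complex_gaussian_singleton: "emeasure complex_gaussian {z} = 0"
proof -
  interpret sigma_finite_measure normal_half
    by (simp add: prob_space_normal_half prob_space_imp_sigma_finite)
  have "(\<lambda>(x, y). Complex x y) -` {z} \<inter> space (normal_half \<Otimes>\<^sub>M normal_half) = {Re z} \<times> {Im z}"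
    by (auto simp: space_pair_measure complex_eq_iff)
  then have "emeasure complex_gaussian {z} = emeasure (normal_half \<Otimes>\<^sub>M normal_half) ({Re z} \<times> {Im z})"
    unfolding complex_gaussian_def by (subst emeasure_distr) auto
  also have "\<dots> = 0"
    by (subst emeasure_pair_measure_Times) (auto simp: emeasure_normal_half_singleton)
  finally show ?thesis .
qed

lemma normal_half_moments:
  shows integrable_normal_half_id: "integrable normal_half (\<lambda>x. x)"
    and integral_normal_half_id: "(\<integral>x. x \<partial>normal_half) = 0"
    and integrable_normal_half_square: "integrable normal_half (\<lambda>x. x\<^sup>2)"
    and integral_normal_half_square: "(\<integral>x. x\<^sup>2 \<partial>normal_half) = 1/2"
proof -
  have \<sigma>: "0 < sqrt (1/2::real)" by simp
  show "integrable normal_half (\<lambda>x. x)"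
    by (subst integrable_density) (auto intro: integrable_normal_moment_nz_1[OF \<sigma>])
  show "(\<integral>x. x \<partial>normal_half) = 0"
    by (subst integral_density) (auto simp: integral_normal_moment_nz_1[OF \<sigma>])
  have "has_bochner_integral lborel (\<lambda>x. normal_density 0 (sqrt (1/2)) x * (x - 0) ^ (2 * 1))
          (fact (2 * 1) / ((2 / (sqrt (1/2))\<^sup>2) ^ 1 * fact 1))"
    by (rule normal_moment_even[OF \<sigma>])
  then have sq: "has_bochner_integral lborel (\<lambda>x. normal_density 0 (sqrt (1/2)) x * x\<^sup>2) (1/2)"
    by (simp add: fact_numeral)
  then show "integrable normal_half (\<lambda>x. x\<^sup>2)"
    by (subst integrable_density) (auto intro: integrable.intros)
  show "(\<integral>x. x\<^sup>2 \<partial>normal_half) = 1/2"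
    using sq by (subst integral_density) (auto dest: has_bochner_integral_integral_eq)
qed

lemma (in prob_space) integral_pair_measure_fst:
  fixes f :: "'b \<Rightarrow> 'c::{banach, second_countable_topology}"
  assumes [measurable]: "f \<in> borel_measurable N"
  shows "integrable (N \<Otimes>\<^sub>M M) (\<lambda>p. f (fst p)) \<longleftrightarrow> integrable N f"
    and "(\<integral>p. f (fst p) \<partial>(N \<Otimes>\<^sub>M M)) = (\<integral>x. f x \<partial>N)"
proof -
  have N: "N = distr (N \<Otimes>\<^sub>M M) N fst"
    by (rule distr_pair_fst[symmetric])
  have "integrable N f \<longleftrightarrow> integrable (distr (N \<Otimes>\<^sub>M M) N fst) f"
    by (simp only: N[symmetric])
  also have "\<dots> \<longleftrightarrow> integrable (N \<Otimes>\<^sub>M M) (\<lambda>p. f (fst p))"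
    by (rule integrable_distr_eq) auto
  finally show "integrable (N \<Otimes>\<^sub>M M) (\<lambda>p. f (fst p)) \<longleftrightarrow> integrable N f" ..
  have "(\<integral>x. f x \<partial>N) = (\<integral>x. f x \<partial>distr (N \<Otimes>\<^sub>M M) N fst)"
    by (simp only: N[symmetric])
  also have "\<dots> = (\<integral>p. f (fst p) \<partial>(N \<Otimes>\<^sub>M M))"
    by (rule integral_distr) auto
  finally show "(\<integral>p. f (fst p) \<partial>(N \<Otimes>\<^sub>M M)) = (\<integral>x. f x \<partial>N)" ..
qed

lemma (in prob_space) integral_pair_measure_snd:
  fixes f :: "'b \<Rightarrow> 'c::{banach, second_countable_topology}"
  assumes "sigma_finite_measure N" and [measurable]: "f \<in> borel_measurable N"
  shows "integrable (M \<Otimes>\<^sub>M N) (\<lambda>p. f (snd p)) \<longleftrightarrow> integrable N f"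
    and "(\<integral>p. f (snd p) \<partial>(M \<Otimes>\<^sub>M N)) = (\<integral>x. f x \<partial>N)"
proof -
  interpret pair_sigma_finite M N
    using assms(1) by (simp add: pair_sigma_finite_def sigma_finite_measure_axioms)
  have swap: "M \<Otimes>\<^sub>M N = distr (N \<Otimes>\<^sub>M M) (M \<Otimes>\<^sub>M N) (\<lambda>(x, y). (y, x))"
    by (rule distr_pair_swap)
  show "integrable (M \<Otimes>\<^sub>M N) (\<lambda>p. f (snd p)) \<longleftrightarrow> integrable N f"
    by (subst swap, subst integrable_distr_eq) (auto simp: case_prod_beta integral_pair_measure_fst)
  show "(\<integral>p. f (snd p) \<partial>(M \<Otimes>\<^sub>M N)) = (\<integral>x. f x \<partial>N)"
    by (subst swap, subst integral_distr) (auto simp: case_prod_beta integral_pair_measure_fst)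
qed

lemma complex_gaussian_integral:
  fixes g :: "complex \<Rightarrow> 'b::{banach, second_countable_topology}"
  assumes [measurable]: "g \<in> borel_measurable borel"
  shows "integrable complex_gaussian g \<longleftrightarrow>
           integrable (normal_half \<Otimes>\<^sub>M normal_half) (\<lambda>p. g (Complex (fst p) (snd p)))"
    and "(\<integral>z. g z \<partial>complex_gaussian) = (\<integral>p. g (Complex (fst p) (snd p)) \<partial>(normal_half \<Otimes>\<^sub>M normal_half))"
proof -
  have m: "(\<lambda>(x, y). Complex x y) \<in> measurable (normal_half \<Otimes>\<^sub>M normal_half) borel"
    by (rule measurable_Complex_normal_half)
  show "integrable complex_gaussian g \<longleftrightarrow>
          integrable (normal_half \<Otimes>\<^sub>M normal_half) (\<lambda>p. g (Complex (fst p) (snd p)))"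
    unfolding complex_gaussian_def by (subst integrable_distr_eq[OF m]) (auto simp: case_prod_beta)
  show "(\<integral>z. g z \<partial>complex_gaussian) = (\<integral>p. g (Complex (fst p) (snd p)) \<partial>(normal_half \<Otimes>\<^sub>M normal_half))"
    unfolding complex_gaussian_def by (subst integral_distr[OF m]) (auto simp: case_prod_beta)
qed

lemma complex_gaussian_mean:
  shows integrable_complex_gaussian_id: "integrable complex_gaussian (\<lambda>z. z)"
    and integral_complex_gaussian_id: "(\<integral>z. z \<partial>complex_gaussian) = 0"
proof -
  interpret prob_space normal_half by (rule prob_space_normal_half)
  have sf: "sigma_finite_measure normal_half"
    by (rule prob_space_imp_sigma_finite[OF prob_space_normal_half])
  have re: "integrable (normal_half \<Otimes>\<^sub>M normal_half) (\<lambda>p. complex_of_real (fst p))"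
    by (subst integral_pair_measure_fst) (auto intro: integrable_normal_half_id)
  have im: "integrable (normal_half \<Otimes>\<^sub>M normal_half) (\<lambda>p. \<i> * complex_of_real (snd p))"
    by (intro integrable_mult_right, subst integral_pair_measure_snd[OF sf])
       (auto intro: integrable_normal_half_id)
  show "integrable complex_gaussian (\<lambda>z. z)"
    by (subst complex_gaussian_integral)
       (auto simp: Complex_eq intro!: Bochner_Integration.integrable_add re im)
  show "(\<integral>z. z \<partial>complex_gaussian) = 0"
    using integral_pair_measure_fst(2)[where N = normal_half and f = "\<lambda>x. x"]
      integral_pair_measure_snd(2)[OF sf, of "\<lambda>x. x"] integral_normal_half_id
    by (subst complex_gaussian_integral) (simp_all add: Complex_eq Bochner_Integration.integral_add[OF re im])
qed

lemma complex_gaussian_second_moment: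
  shows integrable_complex_gaussian_norm_sq: "integrable complex_gaussian (\<lambda>z. cnj z * z)"
    and integral_complex_gaussian_norm_sq: "(\<integral>z. cnj z * z \<partial>complex_gaussian) = 1"
proof -
  interpret prob_space normal_half by (rule prob_space_normal_half)
  have sf: "sigma_finite_measure normal_half"
    by (rule prob_space_imp_sigma_finite[OF prob_space_normal_half])
  note fst_sq = integral_pair_measure_fst[where N = normal_half and f = "\<lambda>x. complex_of_real (x\<^sup>2)"]
  note snd_sq = integral_pair_measure_snd[OF sf, where f = "\<lambda>x. complex_of_real (x\<^sup>2)"]
  have m: "(\<lambda>z. cnj z * z) \<in> borel_measurable borel"
    by (intro borel_measurable_continuous_onI continuous_intros)
  have re_im: "cnj (Complex (fst p) (snd p)) * Complex (fst p) (snd p)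
                 = complex_of_real ((fst p)\<^sup>2) + complex_of_real ((snd p)\<^sup>2)" for p :: "real \<times> real"
    by (simp add: complex_eq_iff power2_eq_square)
  have re: "integrable (normal_half \<Otimes>\<^sub>M normal_half) (\<lambda>p. complex_of_real ((fst p)\<^sup>2))"
    using fst_sq integrable_normal_half_square by (simp del: of_real_power)
  have im: "integrable (normal_half \<Otimes>\<^sub>M normal_half) (\<lambda>p. complex_of_real ((snd p)\<^sup>2))"
    using snd_sq integrable_normal_half_square by (simp del: of_real_power)
  show "integrable complex_gaussian (\<lambda>z. cnj z * z)"
    by (subst complex_gaussian_integral[OF m], simp only: re_im)
       (intro Bochner_Integration.integrable_add re im)
  show "(\<integral>z. cnj z * z \<partial>complex_gaussian) = 1"
    using fst_sq snd_sq integral_normal_half_square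
    by (subst complex_gaussian_integral[OF m], simp only: re_im Bochner_Integration.integral_add[OF re im])
       (simp del: of_real_power add: complex_eq_iff)
qed

lemma complex_gaussian_cnj:
  shows integrable_complex_gaussian_cnj: "integrable complex_gaussian cnj"
    and integral_complex_gaussian_cnj: "(\<integral>z. cnj z \<partial>complex_gaussian) = 0"
  using integrable_cnj[OF integrable_complex_gaussian_id]
    Bochner_Integration.integral_cnj[of complex_gaussian "\<lambda>z. z"] integral_complex_gaussian_id
  by simp_all

interpretation iid_complex_gaussian: product_sigma_finite "\<lambda>_::'i. complex_gaussian"
  by (simp add: product_sigma_finite_def prob_space_complex_gaussian prob_space_imp_sigma_finite)

lemma integral_iid_complex_gaussian_cnj_mult:
  fixes a b :: 'i
  assumes R: "finite R" and a: "a \<in> R" and b: "b \<in> R"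
  shows "integrable (PiM R (\<lambda>_. complex_gaussian)) (\<lambda>y. cnj (y a) * y b)"
    and "(\<integral>y. cnj (y a) * y b \<partial>PiM R (\<lambda>_. complex_gaussian)) = (if a = b then 1 else 0)"
proof -
  interpret prob_space complex_gaussian by (rule prob_space_complex_gaussian)
  have [simp]: "prob UNIV = 1" using prob_space by simp
  define f :: "'i \<Rightarrow> complex \<Rightarrow> complex"
    where "f i z = (if i = a then cnj z else 1) * (if i = b then z else 1)" for i z
  have prod_f: "(\<Prod>i\<in>R. f i (y i)) = cnj (y a) * y b" for y
    using R a b by (simp add: f_def prod.distrib)
  have f_cases: "f i = (if i = a \<and> i = b then (\<lambda>z. cnj z * z) else if i = a then cnj
                        else if i = b then (\<lambda>z. z) else (\<lambda>_. 1))" for i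
    by (auto simp: f_def fun_eq_iff)
  have int_f: "integrable complex_gaussian (f i)" for i
    by (simp add: f_cases integrable_complex_gaussian_id integrable_complex_gaussian_cnj
        integrable_complex_gaussian_norm_sq)
  have "integral\<^sup>L complex_gaussian (f i) =
          (if i = a \<and> i = b then 1 else if i = a \<or> i = b then 0 else 1)" for i
    by (simp add: f_cases integral_complex_gaussian_id integral_complex_gaussian_cnj
        integral_complex_gaussian_norm_sq)
  then have "(\<Prod>i\<in>R. integral\<^sup>L complex_gaussian (f i)) = (if a = b then 1 else 0)"
    using R a b by (auto simp: prod.delta' intro: prod_zero)
  then show "integrable (PiM R (\<lambda>_. complex_gaussian)) (\<lambda>y. cnj (y a) * y b)"
    and "(\<integral>y. cnj (y a) * y b \<partial>PiM R (\<lambda>_. complex_gaussian)) = (if a = b then 1 else 0)"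
    using iid_complex_gaussian.product_integrable_prod[OF R, of f]
      iid_complex_gaussian.product_integral_prod[OF R, of f] int_f
    by (simp_all add: prod_f)
qed

lemma integral_iid_complex_gaussian_quadratic:
  fixes c :: "nat \<Rightarrow> complex" and \<iota> :: "nat \<Rightarrow> 'i"
  assumes R: "finite R" and \<iota>: "inj_on \<iota> {..<n}" "\<iota> ` {..<n} \<subseteq> R"
  shows "integrable (PiM R (\<lambda>_. complex_gaussian)) (\<lambda>y. (cmod (\<Sum>j<n. c j * cnj (y (\<iota> j))))\<^sup>2)"
    and "(\<integral>y. (cmod (\<Sum>j<n. c j * cnj (y (\<iota> j))))\<^sup>2 \<partial>PiM R (\<lambda>_. complex_gaussian))
           = (\<Sum>j<n. (cmod (c j))\<^sup>2)"
proof -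
  let ?P = "PiM R (\<lambda>_. complex_gaussian)"
  let ?q = "\<lambda>y. (cmod (\<Sum>j<n. c j * cnj (y (\<iota> j))))\<^sup>2"
  let ?t = "\<lambda>j l y. (c j * cnj (c l)) * (cnj (y (\<iota> j)) * y (\<iota> l))"
  have expand: "complex_of_real (?q y) = (\<Sum>j<n. \<Sum>l<n. ?t j l y)" for y
  proof -
    have "complex_of_real (?q y) =
            (\<Sum>j<n. c j * cnj (y (\<iota> j))) * cnj (\<Sum>l<n. c l * cnj (y (\<iota> l)))"
      by (rule complex_norm_square)
    also have "\<dots> = (\<Sum>j<n. \<Sum>l<n. ?t j l y)"
      by (simp add: sum_distrib_left sum_distrib_right mult_ac, rule sum.swap)
    finally show ?thesis .
  qed
  have int_t: "integrable ?P (?t j l)" if "j < n" "l < n" for j l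
    using that \<iota>(2) by (intro integrable_mult_right integral_iid_complex_gaussian_cnj_mult(1)[OF R]) auto
  have int_t': "(\<integral>y. ?t j l y \<partial>?P) = (if j = l then complex_of_real ((cmod (c j))\<^sup>2) else 0)"
    if "j < n" "l < n" for j l
  proof -
    have "\<iota> j = \<iota> l \<longleftrightarrow> j = l" using \<iota>(1) that by (auto dest: inj_onD)
    moreover have "\<iota> j \<in> R" "\<iota> l \<in> R" using \<iota>(2) that by auto
    ultimately show ?thesis
      by (simp add: integral_iid_complex_gaussian_cnj_mult(2)[OF R] complex_norm_square
          del: of_real_power)
  qed
  have int_q: "integrable ?P (\<lambda>y. complex_of_real (?q y))"
    unfolding expand using int_t by (intro Bochner_Integration.integrable_sum) auto
  then show "integrable ?P ?q"
    by (simp only: complex_of_real_integrable_eq)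
  have "complex_of_real (\<integral>y. ?q y \<partial>?P) = (\<integral>y. complex_of_real (?q y) \<partial>?P)"
    by (rule integral_complex_of_real[symmetric])
  also have "\<dots> = (\<Sum>j<n. \<integral>y. (\<Sum>l<n. ?t j l y) \<partial>?P)"
    unfolding expand using int_t
    by (intro Bochner_Integration.integral_sum Bochner_Integration.integrable_sum) auto
  also have "\<dots> = (\<Sum>j<n. \<Sum>l<n. \<integral>y. ?t j l y \<partial>?P)"
    using int_t by (intro sum.cong refl Bochner_Integration.integral_sum) auto
  also have "\<dots> = (\<Sum>j<n. \<Sum>l<n. if j = l then complex_of_real ((cmod (c j))\<^sup>2) else 0)"
    by (intro sum.cong refl int_t') auto
  also have "\<dots> = (\<Sum>j<n. complex_of_real ((cmod (c j))\<^sup>2))"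
    by simp
  finally show "(\<integral>y. ?q y \<partial>?P) = (\<Sum>j<n. (cmod (c j))\<^sup>2)"
    by (simp only: of_real_sum[symmetric] of_real_eq_iff)
qed

lemma nn_integral_iid_complex_gaussian_quadratic:
  fixes c :: "nat \<Rightarrow> nat \<Rightarrow> complex" and \<iota> :: "nat \<Rightarrow> 'i"
  assumes R: "finite R" and \<iota>: "inj_on \<iota> {..<n}" "\<iota> ` {..<n} \<subseteq> R"
  shows "(\<integral>\<^sup>+ y. ennreal (\<Sum>i<m. (cmod (\<Sum>j<n. c i j * cnj (y (\<iota> j))))\<^sup>2) \<partial>PiM R (\<lambda>_. complex_gaussian))
           = ennreal (\<Sum>i<m. \<Sum>j<n. (cmod (c i j))\<^sup>2)"
proof -
  note quadratic = integral_iid_complex_gaussian_quadratic[OF R \<iota>]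
  have "(\<integral>\<^sup>+ y. ennreal (\<Sum>i<m. (cmod (\<Sum>j<n. c i j * cnj (y (\<iota> j))))\<^sup>2) \<partial>PiM R (\<lambda>_. complex_gaussian))
          = ennreal (\<integral>y. (\<Sum>i<m. (cmod (\<Sum>j<n. c i j * cnj (y (\<iota> j))))\<^sup>2) \<partial>PiM R (\<lambda>_. complex_gaussian))"
    using quadratic(1)
    by (intro nn_integral_eq_integral Bochner_Integration.integrable_sum AE_I2 sum_nonneg) auto
  also have "\<dots> = ennreal (\<Sum>i<m. \<Sum>j<n. (cmod (c i j))\<^sup>2)"
    using quadratic by (simp add: Bochner_Integration.integral_sum)
  finally show ?thesis .
qed

section \<open>Almost sure invertibility of the channel\<close>

lemma measurable_iid_complex_gaussian_component:
  "i \<in> I \<Longrightarrow> (\<lambda>h. h i) \<in> borel_measurable (PiM I (\<lambda>_. complex_gaussian))"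
  using measurable_component_singleton[of i I "\<lambda>_. complex_gaussian"]
  by (simp add: measurable_cong_sets[OF refl sets_complex_gaussian])

text \<open>Fubini over the \<open>i\<close>-th coordinate: every slice is at most a point, and the complex Gaussian
  has no atoms.\<close>

lemma emeasure_iid_complex_gaussian_eq_0_if_slices_subsingleton:
  assumes I: "finite I" and i: "i \<in> I" and S: "S \<in> sets (PiM I (\<lambda>_. complex_gaussian))"
    and slices: "\<And>h x y. h \<in> space (PiM I (\<lambda>_. complex_gaussian)) \<Longrightarrow>
                    h(i := x) \<in> S \<Longrightarrow> h(i := y) \<in> S \<Longrightarrow> x = y"
  shows "emeasure (PiM I (\<lambda>_. complex_gaussian)) S = 0"
proof -
  let ?P = "\<lambda>I. PiM I (\<lambda>_. complex_gaussian)"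
  have I_insert: "I = insert i (I - {i})" using i by auto
  have slice_null: "(\<integral>\<^sup>+ y. indicator S (x(i := y)) \<partial>complex_gaussian) = 0"
    if x: "x \<in> space (?P (I - {i}))" for x
  proof (cases "\<exists>y0. x(i := y0) \<in> S")
    case True
    then obtain y0 where y0: "x(i := y0) \<in> S" by auto
    have "x(i := 0) \<in> space (?P I)"
      using x i by (auto simp: space_PiM PiE_def extensional_def)
    then have "indicator S (x(i := y)) \<le> (indicator {y0} y :: ennreal)" for y
      using slices[of "x(i := 0)" y y0] y0 by (auto simp: indicator_def)
    then have "(\<integral>\<^sup>+ y. indicator S (x(i := y)) \<partial>complex_gaussian) \<le> emeasure complex_gaussian {y0}"
      using nn_integral_mono[of complex_gaussian "\<lambda>y. indicator S (x(i := y))" "indicator {y0}"]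
      by (simp add: sets_complex_gaussian)
    then show ?thesis by (simp add: emeasure_complex_gaussian_singleton)
  qed simp
  have "emeasure (?P I) S = (\<integral>\<^sup>+ h. indicator S h \<partial>?P I)"
    using S by simp
  also have "\<dots> = (\<integral>\<^sup>+ x. (\<integral>\<^sup>+ y. indicator S (x(i := y)) \<partial>complex_gaussian) \<partial>?P (I - {i}))"
    by (subst I_insert, rule iid_complex_gaussian.product_nn_integral_insert) (use S I I_insert in auto)
  also have "\<dots> = 0"
    by (simp add: slice_null nn_integral_cong[of _ _ "\<lambda>_. 0"])
  finally show ?thesis .
qed

lemma borel_measurable_det:
  fixes A :: "'a \<Rightarrow> 'b::{real_normed_field, second_countable_topology} mat"
  assumes "\<And>x. A x \<in> carrier_mat n n"
    and "\<And>i j. i < n \<Longrightarrow> j < n \<Longrightarrow> (\<lambda>x. A x $$ (i, j)) \<in> borel_measurable N"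
  shows "(\<lambda>x. det (A x)) \<in> borel_measurable N"
proof -
  have "(\<lambda>x. det (A x)) =
          (\<lambda>x. \<Sum>p \<in> {p. p permutes {0..<n}}. of_int (sign p) * (\<Prod>i = 0..<n. A x $$ (i, p i)))"
    using assms(1) by (auto simp: det_def' fun_eq_iff)
  also have "\<dots> \<in> borel_measurable N"
  proof (intro borel_measurable_sum borel_measurable_times borel_measurable_const borel_measurable_prod)
    fix p i assume p: "p \<in> {p. p permutes {0..<n}}" and i: "i \<in> {0..<n}"
    then have "p i < n" using permutes_in_image by fastforce
    then show "(\<lambda>x. A x $$ (i, p i)) \<in> borel_measurable N" using assms(2) i by auto
  qed
  finally show ?thesis .
qed

definition leading_block :: "nat \<Rightarrow> (nat \<times> nat \<Rightarrow> complex) \<Rightarrow> complex mat" where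
  "leading_block n h = mat n n (\<lambda>(i, j). h (i, j))"

lemma leading_block_carrier [simp]: "leading_block n h \<in> carrier_mat n n"
  by (simp add: leading_block_def)

lemma det_leading_block_Suc_update:
  "det (leading_block (Suc n) (h((n, n) := z))) =
     z * det (leading_block n h) + (\<Sum>j<n. h (n, j) * cofactor (leading_block (Suc n) h) n j)"
proof -
  let ?B = "\<lambda>g. leading_block (Suc n) g" and ?h = "h((n, n) := z)"
  have entry: "?B g $$ (n, j) = g (n, j)" if "j < Suc n" for g j
    using that by (simp add: leading_block_def)
  have cofactor_eq: "cofactor (?B ?h) n j = cofactor (?B h) n j" for j
  proof -
    have "mat_delete (?B ?h) n j = mat_delete (?B h) n j"
      by (rule eq_matI) (auto simp: leading_block_def mat_delete_def)
    then show ?thesis by (simp only: cofactor_def)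
  qed
  have cofactor_corner: "cofactor (?B ?h) n n = det (leading_block n h)"
  proof -
    have "mat_delete (?B ?h) n n = leading_block n h"
      by (rule eq_matI) (auto simp: leading_block_def mat_delete_def)
    then show ?thesis by (simp add: cofactor_def)
  qed
  have "det (?B ?h) = (\<Sum>j<Suc n. ?B ?h $$ (n, j) * cofactor (?B ?h) n j)"
    by (rule laplace_expansion_row[OF leading_block_carrier]) simp
  also have "\<dots> = (\<Sum>j<n. ?B ?h $$ (n, j) * cofactor (?B ?h) n j) + ?B ?h $$ (n, n) * cofactor (?B ?h) n n"
    by simp
  also have "(\<Sum>j<n. ?B ?h $$ (n, j) * cofactor (?B ?h) n j) = (\<Sum>j<n. h (n, j) * cofactor (?B h) n j)"
    by (rule sum.cong) (simp_all add: entry cofactor_eq)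
  also have "?B ?h $$ (n, n) * cofactor (?B ?h) n n = z * det (leading_block n h)"
    by (simp only: entry[of n] cofactor_corner lessI) simp
  finally show ?thesis
    by (simp only: add.commute)
qed

lemma borel_measurable_det_leading_block:
  assumes "n \<le> K" "n \<le> M"
  shows "(\<lambda>h. det (leading_block n h)) \<in> borel_measurable (channel_measure K M)"
  unfolding channel_measure_def
proof (rule borel_measurable_det[of _ n])
  fix i j assume ij: "i < n" "j < n"
  then have "(\<lambda>h. h (i, j)) \<in> borel_measurable (PiM ({..<K} \<times> {..<M}) (\<lambda>_. complex_gaussian))"
    using assms by (intro measurable_iid_complex_gaussian_component) auto
  moreover have "(\<lambda>h. leading_block n h $$ (i, j)) = (\<lambda>h. h (i, j))"
    using ij by (simp add: leading_block_def)
  ultimately show "(\<lambda>h. leading_block n h $$ (i, j))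
                     \<in> borel_measurable (PiM ({..<K} \<times> {..<M}) (\<lambda>_. complex_gaussian))"
    by (simp only:)
qed simp

text \<open>Induction on the size of the leading block: as a function of the corner entry, the determinant
  of the larger block is affine with slope the determinant of the smaller one.\<close>

lemma AE_det_leading_block_nonzero:
  assumes "n \<le> K" "n \<le> M"
  shows "AE h in channel_measure K M. det (leading_block n h) \<noteq> 0"
  using assms
proof (induction n)
  case 0
  have "leading_block 0 h = 1\<^sub>m 0" for h by (rule eq_matI) (auto simp: leading_block_def)
  then show ?case by simp
next
  case (Suc n)
  let ?P = "channel_measure K M"
  let ?S = "{h \<in> space ?P. det (leading_block n h) \<noteq> 0 \<and> det (leading_block (Suc n) h) = 0}"
  have m: "(\<lambda>h. det (leading_block n h)) \<in> borel_measurable ?P"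
    "(\<lambda>h. det (leading_block (Suc n) h)) \<in> borel_measurable ?P"
    using Suc.prems by (simp_all add: borel_measurable_det_leading_block)
  have S_eq: "?S = ((\<lambda>h. det (leading_block n h)) -` (UNIV - {0}) \<inter> space ?P)
               \<inter> ((\<lambda>h. det (leading_block (Suc n) h)) -` {0} \<inter> space ?P)"
    by auto
  have S: "?S \<in> sets ?P"
    unfolding S_eq by (intro sets.Int measurable_sets[OF m(1)] measurable_sets[OF m(2)]) auto
  have corner: "(n, n) \<in> {..<K} \<times> {..<M}" using Suc.prems by auto
  have det_update: "det (leading_block n (h((n, n) := z))) = det (leading_block n h)" for h z
    by (rule arg_cong[where f = det], rule eq_matI) (auto simp: leading_block_def)
  have "emeasure (PiM ({..<K} \<times> {..<M}) (\<lambda>_. complex_gaussian)) ?S = 0"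
  proof (rule emeasure_iid_complex_gaussian_eq_0_if_slices_subsingleton[OF _ corner])
    show "?S \<in> sets (PiM ({..<K} \<times> {..<M}) (\<lambda>_. complex_gaussian))"
      using S by (simp only: channel_measure_def)
    fix h x y assume "h \<in> space (PiM ({..<K} \<times> {..<M}) (\<lambda>_. complex_gaussian))"
      and hx: "h((n, n) := x) \<in> ?S" and hy: "h((n, n) := y) \<in> ?S"
    let ?c = "\<Sum>j<n. h (n, j) * cofactor (leading_block (Suc n) h) n j"
    have "det (leading_block n h) \<noteq> 0" "x * det (leading_block n h) + ?c = 0"
      "y * det (leading_block n h) + ?c = 0"
      using hx hy unfolding mem_Collect_eq det_update det_leading_block_Suc_update by blast+
    then show "x = y"
      by (metis add_right_cancel mult_cancel_right)
  qed simp
  then have "emeasure ?P ?S = 0"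
    by (simp only: channel_measure_def)
  then have "AE h in ?P. h \<notin> ?S"
    using S by (intro AE_not_in null_setsI)
  moreover have "AE h in ?P. det (leading_block n h) \<noteq> 0"
    using Suc by simp
  moreover have "AE h in ?P. h \<in> space ?P"
    by (rule AE_space)
  ultimately show ?case
    by eventually_elim auto
qed

section \<open>Orthogonal projections in coordinates\<close>

text \<open>Matrices are functions of the two indices; the inner dimension of a product is explicit.\<close>

type_synonym fmat = "nat \<Rightarrow> nat \<Rightarrow> complex"

definition fmat_mult :: "nat \<Rightarrow> fmat \<Rightarrow> fmat \<Rightarrow> fmat" where
  "fmat_mult n A B i j = (\<Sum>l<n. A i l * B l j)"

definition fmat_adjoint :: "fmat \<Rightarrow> fmat" where
  "fmat_adjoint A i j = cnj (A j i)"

lemma fmat_mult_assoc: "fmat_mult n (fmat_mult m A B) C = fmat_mult m A (fmat_mult n B C)"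
  unfolding fmat_mult_def
  by (auto simp: fun_eq_iff sum_distrib_left sum_distrib_right mult.assoc intro: sum.swap)

lemma fmat_adjoint_mult: "fmat_adjoint (fmat_mult n A B) = fmat_mult n (fmat_adjoint B) (fmat_adjoint A)"
  unfolding fmat_mult_def fmat_adjoint_def by (auto simp: fun_eq_iff mult.commute)

lemma fmat_adjoint_adjoint [simp]: "fmat_adjoint (fmat_adjoint A) = A"
  unfolding fmat_adjoint_def by auto

lemma fmat_mult_cong_right:
  "(\<And>l. l < n \<Longrightarrow> B l j = B' l j) \<Longrightarrow> fmat_mult n A B i j = fmat_mult n A B' i j"
  unfolding fmat_mult_def by auto

lemma fmat_mult_id_left:
  assumes "\<And>l. l < n \<Longrightarrow> A i l = (if i = l then 1 else 0)" and "i < n"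
  shows "fmat_mult n A B i j = B i j"
proof -
  have "fmat_mult n A B i j = (\<Sum>l<n. if i = l then B l j else 0)"
    unfolding fmat_mult_def using assms(1) by (intro sum.cong) auto
  also have "\<dots> = B i j" using assms(2) by simp
  finally show ?thesis .
qed

definition left_inverse_gram :: "nat \<Rightarrow> nat \<Rightarrow> fmat \<Rightarrow> fmat \<Rightarrow> bool" where
  "left_inverse_gram n M X C \<longleftrightarrow>
     (\<forall>p<n. \<forall>r<n. fmat_mult n C (fmat_mult M X (fmat_adjoint X)) p r = (if p = r then 1 else 0))"

text \<open>For \<open>C = (X X\<^sup>*)\<^sup>-\<^sup>1\<close> this is \<open>X\<^sup>* C X\<close>, the orthogonal projection onto the range of \<open>X\<^sup>*\<close>.\<close>

definition range_proj :: "nat \<Rightarrow> fmat \<Rightarrow> fmat \<Rightarrow> fmat" where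
  "range_proj n X C = fmat_mult n (fmat_mult n (fmat_adjoint X) C) X"

lemma trace_range_proj:
  "(\<Sum>i<M. range_proj n X C i i) = (\<Sum>p<n. fmat_mult n C (fmat_mult M X (fmat_adjoint X)) p p)"
proof -
  have "(\<Sum>i<M. range_proj n X C i i) = (\<Sum>i<M. \<Sum>q<n. \<Sum>p<n. C p q * (X q i * cnj (X p i)))"
    unfolding range_proj_def fmat_mult_def fmat_adjoint_def
    by (simp add: sum_distrib_left sum_distrib_right mult_ac)
  also have "\<dots> = (\<Sum>q<n. \<Sum>p<n. \<Sum>i<M. C p q * (X q i * cnj (X p i)))"
    by (subst sum.swap, rule sum.cong[OF refl], rule sum.swap)
  also have "\<dots> = (\<Sum>p<n. fmat_mult n C (fmat_mult M X (fmat_adjoint X)) p p)"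
    unfolding fmat_mult_def fmat_adjoint_def by (subst sum.swap) (simp add: sum_distrib_left)
  finally show ?thesis .
qed

lemma range_proj_mult_adjoint:
  assumes "left_inverse_gram n M X C"
  shows "fmat_mult M (range_proj n X C) (fmat_adjoint (range_proj n X C)) i j
           = fmat_adjoint (range_proj n X C) i j"
proof -
  define Z where "Z = fmat_mult n (fmat_adjoint C) X"
  have adj: "fmat_adjoint (range_proj n X C) = fmat_mult n (fmat_adjoint X) Z"
    unfolding range_proj_def Z_def by (simp add: fmat_adjoint_mult fmat_mult_assoc)
  have "fmat_mult M (range_proj n X C) (fmat_mult n (fmat_adjoint X) Z) =
          fmat_mult n (fmat_adjoint X) (fmat_mult n (fmat_mult n C (fmat_mult M X (fmat_adjoint X))) Z)"
    unfolding range_proj_def by (simp add: fmat_mult_assoc)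
  moreover have "fmat_mult n (fmat_adjoint X) (fmat_mult n (fmat_mult n C (fmat_mult M X (fmat_adjoint X))) Z) i j
                   = fmat_mult n (fmat_adjoint X) Z i j"
    using assms unfolding left_inverse_gram_def
    by (intro fmat_mult_cong_right fmat_mult_id_left) auto
  ultimately show ?thesis by (simp only: adj)
qed

text \<open>Since \<open>P P\<^sup>* = P\<^sup>*\<close>, the squared Frobenius norm of \<open>I - P\<close> is its trace \<open>M - tr P\<close>, and
  \<open>tr P = n\<close>.\<close>

lemma frobenius_id_minus_range_proj:
  assumes C: "left_inverse_gram n M X C"
  shows "(\<Sum>i<M. \<Sum>j<M. (cmod ((if i = j then 1 else 0) - range_proj n X C i j))\<^sup>2) = real M - real n"
proof -
  let ?P = "range_proj n X C"
  have entry: "complex_of_real ((cmod ((if i = j then 1 else 0) - ?P i j))\<^sup>2) =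
                 (if i = j then 1 - ?P i i - cnj (?P i i) else 0) + ?P i j * cnj (?P i j)" for i j
    unfolding complex_norm_square by (cases "i = j") (simp_all add: algebra_simps)
  have row: "(\<Sum>j<M. ?P i j * cnj (?P i j)) = cnj (?P i i)" for i
    using range_proj_mult_adjoint[OF C, of i i] unfolding fmat_mult_def fmat_adjoint_def by simp
  have "complex_of_real (\<Sum>i<M. \<Sum>j<M. (cmod ((if i = j then 1 else 0) - ?P i j))\<^sup>2)
          = (\<Sum>i<M. \<Sum>j<M. (if i = j then 1 - ?P i i - cnj (?P i i) else 0) + ?P i j * cnj (?P i j))"
    by (simp only: of_real_sum entry)
  also have "\<dots> = (\<Sum>i<M. (1 - ?P i i - cnj (?P i i)) + cnj (?P i i))"
    by (intro sum.cong refl) (simp add: sum.distrib row)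
  also have "\<dots> = of_nat M - (\<Sum>i<M. ?P i i)"
    by (simp add: sum_subtractf)
  also have "(\<Sum>i<M. ?P i i) = (\<Sum>p<n. 1)"
    unfolding trace_range_proj using C by (intro sum.cong refl) (simp add: left_inverse_gram_def)
  also have "of_nat M - (\<Sum>p<n. 1) = complex_of_real (real M - real n)"
    by simp
  finally show ?thesis
    by (simp only: of_real_eq_iff)
qed

lemma range_proj_orthogonal:
  assumes "\<And>p. p < n \<Longrightarrow> (\<Sum>i<M. X p i * \<phi> i) = 0"
  shows "(\<Sum>i<M. cnj (range_proj n X C i j) * \<phi> i) = 0"
proof -
  have "(\<Sum>i<M. cnj (range_proj n X C i j) * \<phi> i)
          = (\<Sum>i<M. \<Sum>q<n. \<Sum>p<n. (cnj (C p q) * cnj (X q j)) * (X p i * \<phi> i))"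
    unfolding range_proj_def fmat_mult_def fmat_adjoint_def
    by (simp add: sum_distrib_left sum_distrib_right mult_ac)
  also have "\<dots> = (\<Sum>q<n. \<Sum>p<n. (cnj (C p q) * cnj (X q j)) * (\<Sum>i<M. X p i * \<phi> i))"
    by (subst sum.swap, rule sum.cong[OF refl], subst sum.swap) (simp add: sum_distrib_left)
  also have "\<dots> = 0"
    by (simp add: assms)
  finally show ?thesis .
qed

text \<open>If \<open>\<phi>\<close> is orthogonal to the rows of \<open>X\<close> and \<open>\<langle>a, \<phi>\<rangle> = 1\<close>, then also
  \<open>\<langle>(I - P) a, \<phi>\<rangle> = 1\<close>, and Cauchy-Schwarz applies.\<close>

lemma residual_norm_sq_mult_norm_sq_ge_1:
  assumes orth: "\<And>p. p < n \<Longrightarrow> (\<Sum>i<M. X p i * \<phi> i) = 0"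
    and inner: "(\<Sum>j<M. cnj (a j) * \<phi> j) = 1"
  shows "1 \<le> (\<Sum>i<M. (cmod (\<Sum>j<M. ((if i = j then 1 else 0) - range_proj n X C i j) * a j))\<^sup>2)
              * (\<Sum>j<M. (cmod (\<phi> j))\<^sup>2)"
proof -
  let ?P = "range_proj n X C"
  define r where "r i = (\<Sum>j<M. ((if i = j then 1 else 0) - ?P i j) * a j)" for i
  have r: "r i = a i - (\<Sum>j<M. ?P i j * a j)" if "i < M" for i
    using that by (simp add: r_def left_diff_distrib sum_subtractf if_distrib[of "\<lambda>x. x * a _"] cong: if_cong)
  have "(\<Sum>i<M. cnj (\<Sum>j<M. ?P i j * a j) * \<phi> i) = (\<Sum>i<M. \<Sum>j<M. cnj (a j) * (cnj (?P i j) * \<phi> i))"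
    by (simp add: sum_distrib_left sum_distrib_right mult_ac)
  also have "\<dots> = (\<Sum>j<M. cnj (a j) * (\<Sum>i<M. cnj (?P i j) * \<phi> i))"
    by (subst sum.swap) (simp add: sum_distrib_left)
  also have "\<dots> = 0"
    by (simp add: range_proj_orthogonal[OF orth])
  finally have "(\<Sum>i<M. cnj (r i) * \<phi> i) = 1"
    using inner by (simp add: r left_diff_distrib sum_subtractf)
  then have "1 = cmod (\<Sum>i<M. cnj (r i) * \<phi> i)"
    by simp
  also have "\<dots> \<le> (\<Sum>i<M. cmod (r i) * cmod (\<phi> i))"
    by (rule order_trans[OF norm_sum]) (simp add: norm_mult)
  finally have "1 \<le> (\<Sum>i<M. cmod (r i) * cmod (\<phi> i))\<^sup>2"
    by (simp add: one_le_power)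
  also have "\<dots> \<le> (\<Sum>i<M. (cmod (r i))\<^sup>2) * (\<Sum>i<M. (cmod (\<phi> i))\<^sup>2)"
    by (rule Cauchy_Schwarz_ineq_sum)
  finally show ?thesis unfolding r_def .
qed

definition gram_mat :: "nat \<Rightarrow> nat \<Rightarrow> fmat \<Rightarrow> complex mat" where
  "gram_mat n M X = mat n n (\<lambda>(p, q). fmat_mult M X (fmat_adjoint X) p q)"

lemma gram_mat_carrier [simp]: "gram_mat n M X \<in> carrier_mat n n"
  and dim_row_gram_mat [simp]: "dim_row (gram_mat n M X) = n"
  and dim_col_gram_mat [simp]: "dim_col (gram_mat n M X) = n"
  by (simp_all add: gram_mat_def)

definition lin_indep_rows :: "nat \<Rightarrow> nat \<Rightarrow> fmat \<Rightarrow> bool" where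
  "lin_indep_rows n M X \<longleftrightarrow> (\<forall>c. (\<forall>j<M. (\<Sum>p<n. c p * X p j) = 0) \<longrightarrow> (\<forall>p<n. c p = 0))"

lemma gram_quadratic_form:
  "(\<Sum>p<n. cnj (v p) * (\<Sum>q<n. fmat_mult M X (fmat_adjoint X) p q * v q))
     = complex_of_real (\<Sum>l<M. (cmod (\<Sum>q<n. v q * cnj (X q l)))\<^sup>2)"
proof -
  let ?w = "\<lambda>l. \<Sum>q<n. v q * cnj (X q l)"
  have "(\<Sum>p<n. cnj (v p) * (\<Sum>q<n. fmat_mult M X (fmat_adjoint X) p q * v q))
          = (\<Sum>p<n. \<Sum>q<n. \<Sum>l<M. (cnj (v p) * X p l) * (v q * cnj (X q l)))"
    unfolding fmat_mult_def fmat_adjoint_def by (simp add: sum_distrib_left sum_distrib_right mult_ac)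
  also have "\<dots> = (\<Sum>p<n. \<Sum>l<M. \<Sum>q<n. (cnj (v p) * X p l) * (v q * cnj (X q l)))"
    by (rule sum.cong[OF refl], rule sum.swap)
  also have "\<dots> = (\<Sum>l<M. \<Sum>p<n. \<Sum>q<n. (cnj (v p) * X p l) * (v q * cnj (X q l)))"
    by (rule sum.swap)
  also have "\<dots> = (\<Sum>l<M. ?w l * cnj (?w l))"
    by (simp add: sum_distrib_left sum_distrib_right mult_ac)
  also have "\<dots> = complex_of_real (\<Sum>l<M. (cmod (?w l))\<^sup>2)"
    by (simp only: of_real_sum complex_norm_square)
  finally show ?thesis .
qed

lemma det_gram_mat_nonzero:
  assumes "lin_indep_rows n M X"
  shows "det (gram_mat n M X) \<noteq> 0"
proof
  assume "det (gram_mat n M X) = 0"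
  then obtain v where v: "v \<in> carrier_vec n" "v \<noteq> 0\<^sub>v n" "gram_mat n M X *\<^sub>v v = 0\<^sub>v n"
    using det_0_iff_vec_prod_zero[of "gram_mat n M X" n] by auto
  define u where "u = vec_index v"
  have "(\<Sum>q<n. fmat_mult M X (fmat_adjoint X) p q * u q) = 0" if "p < n" for p
    using arg_cong[OF v(3), of "\<lambda>w. vec_index w p"] that v(1)
    by (simp add: u_def gram_mat_def scalar_prod_def atLeast0LessThan)
  then have "(\<Sum>p<n. cnj (u p) * (\<Sum>q<n. fmat_mult M X (fmat_adjoint X) p q * u q)) = 0"
    by simp
  then have "complex_of_real (\<Sum>l<M. (cmod (\<Sum>q<n. u q * cnj (X q l)))\<^sup>2) = 0"
    unfolding gram_quadratic_form .
  then have w0: "(\<Sum>q<n. u q * cnj (X q l)) = 0" if "l < M" for l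
    using that by (subst (asm) of_real_eq_0_iff, subst (asm) sum_nonneg_eq_0_iff) auto
  have "(\<Sum>q<n. cnj (u q) * X q l) = 0" if "l < M" for l
  proof -
    have "(\<Sum>q<n. cnj (u q) * X q l) = cnj (\<Sum>q<n. u q * cnj (X q l))"
      by (simp add: mult.commute)
    then show ?thesis using w0[OF that] by (metis complex_cnj_zero)
  qed
  then have "\<forall>q<n. cnj (u q) = 0"
    using assms[unfolded lin_indep_rows_def, THEN spec[of _ "\<lambda>q. cnj (u q)"]] by auto
  then have "v = 0\<^sub>v n" using v(1) by (intro eq_vecI) (auto simp: u_def)
  then show False using v(2) by simp
qed

text \<open>The inverse of the Gram matrix through the adjugate: a total, explicitly measurable formula
  (it is \<open>0\<close> when the Gram matrix is singular).\<close>

definition gram_inv :: "nat \<Rightarrow> nat \<Rightarrow> fmat \<Rightarrow> fmat" where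
  "gram_inv n M X p q = adj_mat (gram_mat n M X) $$ (p, q) / det (gram_mat n M X)"

definition gram_proj :: "nat \<Rightarrow> nat \<Rightarrow> fmat \<Rightarrow> fmat" where
  "gram_proj n M X = range_proj n X (gram_inv n M X)"

lemma left_inverse_gram_gram_inv:
  assumes d: "det (gram_mat n M X) \<noteq> 0"
  shows "left_inverse_gram n M X (gram_inv n M X)"
  unfolding left_inverse_gram_def
proof (intro allI impI)
  fix p r assume p: "p < n" and r: "r < n"
  let ?G = "gram_mat n M X"
  have "(adj_mat ?G * ?G) $$ (p, r) = (det ?G \<cdot>\<^sub>m 1\<^sub>m n) $$ (p, r)"
    using adj_mat(3)[OF gram_mat_carrier[of n M X]] by simp
  then have "(\<Sum>q<n. adj_mat ?G $$ (p, q) * ?G $$ (q, r)) = det ?G * (if p = r then 1 else 0)"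
    using p r adj_mat(1)[OF gram_mat_carrier[of n M X]] by (simp add: scalar_prod_def atLeast0LessThan)
  moreover have "(\<Sum>q<n. adj_mat ?G $$ (p, q) * ?G $$ (q, r)) =
                   (\<Sum>q<n. adj_mat ?G $$ (p, q) * fmat_mult M X (fmat_adjoint X) q r)"
    using r by (intro sum.cong refl) (simp add: gram_mat_def)
  ultimately have "(\<Sum>q<n. adj_mat ?G $$ (p, q) * fmat_mult M X (fmat_adjoint X) q r)
                     = det ?G * (if p = r then 1 else 0)"
    by simp
  moreover have "fmat_mult n (gram_inv n M X) (fmat_mult M X (fmat_adjoint X)) p r
                   = (\<Sum>q<n. adj_mat ?G $$ (p, q) * fmat_mult M X (fmat_adjoint X) q r) / det ?G"
    unfolding fmat_mult_def[of n] gram_inv_def by (simp add: sum_divide_distrib)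
  ultimately show "fmat_mult n (gram_inv n M X) (fmat_mult M X (fmat_adjoint X)) p r = (if p = r then 1 else 0)"
    using d by simp
qed

definition complement_frobenius_sq :: "nat \<Rightarrow> nat \<Rightarrow> fmat \<Rightarrow> real" where
  "complement_frobenius_sq n M X = (\<Sum>i<M. \<Sum>j<M. (cmod ((if i = j then 1 else 0) - gram_proj n M X i j))\<^sup>2)"

lemma complement_frobenius_sq_eq:
  "det (gram_mat n M X) \<noteq> 0 \<Longrightarrow> complement_frobenius_sq n M X = real M - real n"
  unfolding complement_frobenius_sq_def gram_proj_def
  by (intro frobenius_id_minus_range_proj left_inverse_gram_gram_inv)

lemma borel_measurable_cnj: "cnj \<in> borel_measurable (borel :: complex measure)"
  by (intro borel_measurable_continuous_onI continuous_intros)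

lemma borel_measurable_gram_proj:
  fixes X :: "'a \<Rightarrow> fmat"
  assumes X: "\<And>p j. (\<lambda>x. X x p j) \<in> borel_measurable N"
  shows "(\<lambda>x. gram_proj n M (X x) i j) \<in> borel_measurable N"
proof -
  have G: "(\<lambda>x. gram_mat n M (X x) $$ (p, q)) \<in> borel_measurable N" if "p < n" "q < n" for p q
  proof -
    have "(\<lambda>x. gram_mat n M (X x) $$ (p, q)) = (\<lambda>x. \<Sum>l<M. X x p l * cnj (X x q l))"
      using that by (simp add: gram_mat_def fmat_mult_def fmat_adjoint_def)
    then show ?thesis
      by (simp only:) (intro borel_measurable_sum borel_measurable_times X
          measurable_compose[OF X borel_measurable_cnj])
  qed
  have det_minor: "(\<lambda>x. det (mat_delete (gram_mat n M (X x)) q p)) \<in> borel_measurable N"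
    if "p < n" "q < n" for p q
  proof (rule borel_measurable_det[of _ "n - 1"])
    fix a b assume ab: "a < n - 1" "b < n - 1"
    define a' where "a' = (if a < q then a else Suc a)"
    define b' where "b' = (if b < p then b else Suc b)"
    have "a' < n" "b' < n" using ab by (auto simp: a'_def b'_def)
    then have "(\<lambda>x. gram_mat n M (X x) $$ (a', b')) \<in> borel_measurable N"
      by (rule G)
    moreover have "(\<lambda>x. mat_delete (gram_mat n M (X x)) q p $$ (a, b)) = (\<lambda>x. gram_mat n M (X x) $$ (a', b'))"
      using ab unfolding mat_delete_def a'_def b'_def by (intro ext) simp
    ultimately show "(\<lambda>x. mat_delete (gram_mat n M (X x)) q p $$ (a, b)) \<in> borel_measurable N"
      by (simp only:)
  qed (rule mat_delete_carrier, rule gram_mat_carrier)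
  have inv: "(\<lambda>x. gram_inv n M (X x) p q) \<in> borel_measurable N" if "p < n" "q < n" for p q
  proof -
    have "gram_inv n M (X x) p q =
            (-1) ^ (q + p) * det (mat_delete (gram_mat n M (X x)) q p) / det (gram_mat n M (X x))" for x
      using that by (simp add: gram_inv_def adj_mat_def cofactor_def)
    then show ?thesis
      using that by (simp add: det_minor borel_measurable_divide borel_measurable_times
          borel_measurable_det[OF gram_mat_carrier G])
  qed
  show ?thesis
    unfolding gram_proj_def range_proj_def fmat_mult_def fmat_adjoint_def
    by (intro borel_measurable_sum borel_measurable_times inv X
        measurable_compose[OF X borel_measurable_cnj]) auto
qed

section \<open>Zero forcing\<close>

definition skip_index :: "nat \<Rightarrow> nat \<Rightarrow> nat" where
  "skip_index k p = (if p < k then p else Suc p)"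

lemma skip_index_less: "k < K \<Longrightarrow> p < K - 1 \<Longrightarrow> skip_index k p < K"
  by (auto simp: skip_index_def)

lemma skip_index_neq: "skip_index k p \<noteq> k"
  by (auto simp: skip_index_def)

lemma inj_skip_index: "inj (skip_index k)"
  unfolding inj_def skip_index_def by auto

lemma skip_index_image: "k < K \<Longrightarrow> skip_index k ` {..<K - 1} = {..<K} - {k}"
proof (intro equalityI subsetI)
  fix i assume "k < K" "i \<in> {..<K} - {k}"
  then show "i \<in> skip_index k ` {..<K - 1}"
    by (cases "i < k") (auto simp: skip_index_def image_iff intro!: bexI[of _ "i - 1"])
qed (auto simp: skip_index_def)

definition other_rows :: "nat \<Rightarrow> nat \<Rightarrow> nat \<Rightarrow> (nat \<times> nat \<Rightarrow> complex) \<Rightarrow> fmat" where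
  "other_rows K M k h p j = (if p < K - 1 \<and> j < M then h (skip_index k p, j) else 0)"

lemma lin_indep_rows_channel:
  assumes d: "det (leading_block K h) \<noteq> 0" and "K \<le> M"
  shows "lin_indep_rows K M (curry h)"
  unfolding lin_indep_rows_def
proof (rule allI, rule impI)
  fix c assume c: "\<forall>j<M. (\<Sum>p<K. c p * curry h p j) = 0"
  let ?B = "transpose_mat (leading_block K h)"
  have "?B *\<^sub>v vec K c = 0\<^sub>v K"
    using c \<open>K \<le> M\<close>
    by (intro eq_vecI) (auto simp: leading_block_def scalar_prod_def atLeast0LessThan mult.commute)
  moreover have "det ?B \<noteq> 0"
    using d by (simp add: det_transpose[OF leading_block_carrier])
  ultimately have "vec K c = 0\<^sub>v K"
    using det_0_iff_vec_prod_zero[of ?B K]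
    by (meson transpose_carrier_mat leading_block_carrier vec_carrier)
  then show "\<forall>p<K. c p = 0"
    by (metis index_vec index_zero_vec(1))
qed

lemma lin_indep_rows_other_rows:
  assumes k: "k < K" and indep: "lin_indep_rows K M (curry h)"
  shows "lin_indep_rows (K - 1) M (other_rows K M k h)"
  unfolding lin_indep_rows_def
proof (rule allI, rule impI)
  fix c assume c: "\<forall>j<M. (\<Sum>p<K - 1. c p * other_rows K M k h p j) = 0"
  define c' where "c' i = (if i = k then 0 else c (if i < k then i else i - 1))" for i
  have c'_skip: "c' (skip_index k p) = c p" for p
    by (auto simp: c'_def skip_index_def)
  have "(\<Sum>i<K. c' i * curry h i j) = 0" if j: "j < M" for j
  proof -
    have "(\<Sum>i<K. c' i * curry h i j) = (\<Sum>i\<in>{..<K} - {k}. c' i * curry h i j)"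
      using k by (subst sum.remove[of _ k]) (auto simp: c'_def)
    also have "\<dots> = (\<Sum>i\<in>skip_index k ` {..<K - 1}. c' i * curry h i j)"
      by (simp only: skip_index_image[OF k])
    also have "\<dots> = (\<Sum>p<K - 1. c p * other_rows K M k h p j)"
      using j by (simp add: sum.reindex inj_on_subset[OF inj_skip_index] c'_skip other_rows_def)
    finally show ?thesis using c j by simp
  qed
  then have "\<forall>i<K. c' i = 0"
    using indep[unfolded lin_indep_rows_def, THEN spec[of _ c']] by blast
  then show "\<forall>p<K - 1. c p = 0"
    using skip_index_less[OF k] c'_skip by metis
qed

lemma mat_adjoint_eq:
  fixes A :: "complex mat"
  assumes "A \<in> carrier_mat n m"
  shows "mat_adjoint A = mat m n (\<lambda>(i, j). cnj (A $$ (j, i)))"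
  using assms unfolding mat_adjoint_def by (intro eq_matI) (auto simp: mat_of_rows_index)

lemma channel_mat_carrier [simp]: "channel_mat K M h \<in> carrier_mat K M"
  by (simp add: channel_mat_def)

lemma channel_gram: "channel_mat K M h * mat_adjoint (channel_mat K M h) = gram_mat K M (curry h)"
  unfolding mat_adjoint_eq[OF channel_mat_carrier]
  by (rule eq_matI)
     (auto simp: gram_mat_def fmat_mult_def fmat_adjoint_def channel_mat_def scalar_prod_def atLeast0LessThan)

lemma zf_precoder_right_inverse:
  fixes H :: "complex mat"
  assumes H: "H \<in> carrier_mat K M" and d: "det (H * mat_adjoint H) \<noteq> 0"
  shows "zf_precoder H \<in> carrier_mat M K" and "H * zf_precoder H = 1\<^sub>m K"
proof -
  let ?A = "H * mat_adjoint H"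
  have adj: "mat_adjoint H \<in> carrier_mat M K"
    using H by (simp add: mat_adjoint_eq[OF H])
  have A: "?A \<in> carrier_mat K K"
    using H adj by simp
  have "?A \<in> Units (ring_mat TYPE(complex) K (undefined :: unit))"
    by (rule det_non_zero_imp_unit[OF A d])
  then obtain B where B: "mat_inverse ?A = Some B"
    using mat_inverse(1)[OF A, where b = "undefined :: unit"] by (cases "mat_inverse ?A") auto
  then have AB: "?A * B = 1\<^sub>m K" and B_carrier: "B \<in> carrier_mat K K"
    using mat_inverse(2)[OF A B] by auto
  show "zf_precoder H \<in> carrier_mat M K"
    using adj B_carrier by (simp add: zf_precoder_def B)
  show "H * zf_precoder H = 1\<^sub>m K"
    using assoc_mult_mat[OF H adj B_carrier] AB by (simp add: zf_precoder_def B)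
qed

text \<open>The quantity \<open>\<parallel>(I - \<Pi>\<^sub>k) h\<^sub>k\<^sup>*\<parallel>\<^sup>2\<close> of the proof sketch above.\<close>

definition residual_norm_sq :: "nat \<Rightarrow> nat \<Rightarrow> nat \<Rightarrow> (nat \<times> nat \<Rightarrow> complex) \<Rightarrow> real" where
  "residual_norm_sq K M k h =
     (\<Sum>i<M. (cmod (\<Sum>j<M. ((if i = j then 1 else 0) - gram_proj (K - 1) M (other_rows K M k h) i j)
                            * cnj (h (k, j))))\<^sup>2)"

lemma one_le_residual_norm_sq_mult_zf_norm_sq:
  assumes k: "k < K" and KM: "K \<le> M" and d: "det (leading_block K h) \<noteq> 0"
  shows "1 \<le> residual_norm_sq K M k h * vec_norm_sq (col (zf_precoder (channel_mat K M h)) k)"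
proof -
  let ?H = "channel_mat K M h" and ?F = "zf_precoder (channel_mat K M h)"
  define \<phi> where "\<phi> j = ?F $$ (j, k)" for j
  have indep: "lin_indep_rows K M (curry h)"
    by (rule lin_indep_rows_channel[OF d KM])
  have "det (?H * mat_adjoint ?H) \<noteq> 0"
    unfolding channel_gram by (rule det_gram_mat_nonzero[OF indep])
  note F = zf_precoder_right_inverse[of ?H K M, OF _ this]
  have HF: "(\<Sum>j<M. h (i, j) * \<phi> j) = (if i = k then 1 else 0)" if i: "i < K" for i
  proof -
    have "(?H * ?F) $$ (i, k) = (if i = k then 1 else 0)"
      using F(2) i k by (simp add: channel_mat_def)
    then show ?thesis
      using i k F(1) by (simp add: \<phi>_def channel_mat_def scalar_prod_def atLeast0LessThan)
  qed
  have orth: "(\<Sum>j<M. other_rows K M k h p j * \<phi> j) = 0" if p: "p < K - 1" for p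
    using HF[OF skip_index_less[OF k p]] skip_index_neq[of k p] p by (simp add: other_rows_def)
  have "1 \<le> residual_norm_sq K M k h * (\<Sum>j<M. (cmod (\<phi> j))\<^sup>2)"
    unfolding residual_norm_sq_def gram_proj_def
    by (rule residual_norm_sq_mult_norm_sq_ge_1[OF orth]) (use HF[OF k] in simp_all)
  also have "(\<Sum>j<M. (cmod (\<phi> j))\<^sup>2) = vec_norm_sq (col ?F k)"
    using F(1) k by (simp add: vec_norm_sq_def \<phi>_def)
  finally show ?thesis .
qed

section \<open>Expectation of the residual\<close>

lemma borel_measurable_other_rows:
  assumes "k < K"
  shows "(\<lambda>h. other_rows K M k h p j) \<in> borel_measurable (channel_measure K M)"
proof (cases "p < K - 1 \<and> j < M")
  case True
  then have "(skip_index k p, j) \<in> {..<K} \<times> {..<M}"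
    using skip_index_less[OF assms] by auto
  then have "(\<lambda>h. h (skip_index k p, j)) \<in> borel_measurable (channel_measure K M)"
    unfolding channel_measure_def by (rule measurable_iid_complex_gaussian_component)
  moreover have "(\<lambda>h. other_rows K M k h p j) = (\<lambda>h. h (skip_index k p, j))"
    using True by (simp add: other_rows_def fun_eq_iff)
  ultimately show ?thesis
    by (simp only:)
next
  case False
  then have "(\<lambda>h. other_rows K M k h p j) = (\<lambda>h. 0)"
    by (auto simp: other_rows_def fun_eq_iff)
  then show ?thesis
    by (simp only: borel_measurable_const)
qed

lemma borel_measurable_residual_norm_sq:
  assumes "k < K"
  shows "(\<lambda>h. residual_norm_sq K M k h) \<in> borel_measurable (channel_measure K M)"
proof -
  have row_k: "(\<lambda>h. h (k, j)) \<in> borel_measurable (channel_measure K M)" if "j \<in> {..<M}" for j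
    unfolding channel_measure_def
    by (rule measurable_iid_complex_gaussian_component) (use assms that in blast)
  show ?thesis
    unfolding residual_norm_sq_def
    by (intro borel_measurable_sum borel_measurable_power measurable_compose[OF _ borel_measurable_norm]
        borel_measurable_times borel_measurable_diff borel_measurable_const borel_measurable_gram_proj
        borel_measurable_other_rows[OF assms] measurable_compose[OF row_k borel_measurable_cnj])
qed

text \<open>Integrating out the \<open>k\<close>-th row first: it is independent of the other rows, which determine the
  projection.\<close>

lemma nn_integral_residual_norm_sq_eq_frobenius:
  assumes k: "k < K"
  shows "(\<integral>\<^sup>+ h. ennreal (residual_norm_sq K M k h) \<partial>channel_measure K M)
           = (\<integral>\<^sup>+ h. ennreal (complement_frobenius_sq (K - 1) M (other_rows K M k h)) \<partial>channel_measure K M)"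
proof -
  define R where "R = {k} \<times> {..<M}"
  define J where "J = {..<K} \<times> {..<M} - R"
  have disj: "J \<inter> R = {}" and fin: "finite J" "finite R"
    unfolding J_def R_def by auto
  have "{..<K} \<times> {..<M} = J \<union> R"
    using k unfolding J_def R_def by auto
  then have measure: "channel_measure K M = PiM (J \<union> R) (\<lambda>_. complex_gaussian)"
    unfolding channel_measure_def by (rule arg_cong)
  define X where "X x = other_rows K M k (merge J R (x, undefined))" for x
  have rows: "other_rows K M k (merge J R (x, y)) = X x" for x y
  proof (intro ext)
    fix p j
    have "p < K - 1 \<Longrightarrow> j < M \<Longrightarrow> (skip_index k p, j) \<in> J"
      using skip_index_less[OF k] skip_index_neq[of k p] unfolding J_def R_def by auto
    then show "other_rows K M k (merge J R (x, y)) p j = X x p j"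
      by (simp add: X_def other_rows_def merge_def)
  qed
  have row_k: "merge J R (x, y) (k, j) = y (k, j)" if "j < M" for x y j
    using that disj by (auto simp: R_def merge_def)
  have inner_residual: "(\<integral>\<^sup>+ y. ennreal (residual_norm_sq K M k (merge J R (x, y))) \<partial>PiM R (\<lambda>_. complex_gaussian))
                          = ennreal (complement_frobenius_sq (K - 1) M (X x))" for x
  proof -
    define c where "c i j = (if i = j then 1 else 0) - gram_proj (K - 1) M (X x) i j" for i j
    have "residual_norm_sq K M k (merge J R (x, y)) = (\<Sum>i<M. (cmod (\<Sum>j<M. c i j * cnj (y (k, j))))\<^sup>2)" for y
      unfolding residual_norm_sq_def c_def rows by (intro sum.cong refl) (simp add: row_k)
    moreover have "inj_on (Pair k) {..<M}" "Pair k ` {..<M} \<subseteq> R"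
      unfolding R_def by (auto simp: inj_on_def)
    ultimately show ?thesis
      using nn_integral_iid_complex_gaussian_quadratic[OF fin(2), where \<iota> = "Pair k" and n = M and m = M and c = c]
      by (simp add: complement_frobenius_sq_def c_def)
  qed
  have inner_frobenius: "(\<integral>\<^sup>+ y. ennreal (complement_frobenius_sq (K - 1) M (other_rows K M k (merge J R (x, y))))
                             \<partial>PiM R (\<lambda>_. complex_gaussian)) = ennreal (complement_frobenius_sq (K - 1) M (X x))"
    for x
  proof -
    interpret prob_space "PiM R (\<lambda>_. complex_gaussian)"
      by (intro prob_space_PiM prob_space_complex_gaussian)
    show ?thesis
      unfolding rows by (simp add: emeasure_space_1)
  qed
  have "(\<lambda>h. ennreal (residual_norm_sq K M k h)) \<in> borel_measurable (PiM (J \<union> R) (\<lambda>_. complex_gaussian))"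
    using borel_measurable_residual_norm_sq[OF k, of M] unfolding measure by simp
  moreover have "(\<lambda>h. ennreal (complement_frobenius_sq (K - 1) M (other_rows K M k h)))
                   \<in> borel_measurable (PiM (J \<union> R) (\<lambda>_. complex_gaussian))"
    unfolding complement_frobenius_sq_def measure[symmetric]
    by (intro measurable_compose[OF _ measurable_ennreal] borel_measurable_sum borel_measurable_power
        measurable_compose[OF _ borel_measurable_norm] borel_measurable_diff borel_measurable_const borel_measurable_gram_proj
        borel_measurable_other_rows[OF k])
  ultimately show ?thesis
    unfolding measure
    by (simp only: iid_complex_gaussian.product_nn_integral_fold[OF disj fin] inner_residual inner_frobenius)
qed

lemma nn_integral_residual_norm_sq:
  assumes k: "k < K" and KM: "K \<le> M"
  shows "(\<integral>\<^sup>+ h. ennreal (residual_norm_sq K M k h) \<partial>channel_measure K M) = ennreal (real M - real K + 1)"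
proof -
  interpret prob_space "channel_measure K M"
    unfolding channel_measure_def by (intro prob_space_PiM prob_space_complex_gaussian)
  have "AE h in channel_measure K M. complement_frobenius_sq (K - 1) M (other_rows K M k h) = real M - real K + 1"
    using AE_det_leading_block_nonzero[OF order_refl KM]
  proof eventually_elim
    case (elim h)
    then have "det (gram_mat (K - 1) M (other_rows K M k h)) \<noteq> 0"
      using KM k by (intro det_gram_mat_nonzero lin_indep_rows_other_rows lin_indep_rows_channel)
    then show ?case
      using k by (simp add: complement_frobenius_sq_eq of_nat_diff)
  qed
  then have "AE h in channel_measure K M.
      ennreal (complement_frobenius_sq (K - 1) M (other_rows K M k h)) = ennreal (real M - real K + 1)"
    by eventually_elim (rule arg_cong)
  then show ?thesis
    unfolding nn_integral_residual_norm_sq_eq_frobenius[OF k]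
    by (simp add: nn_integral_cong_AE emeasure_space_1)
qed

section \<open>Concavity of the rate\<close>

lemma log2_le_tangent:
  fixes c m x :: real
  assumes c: "0 < c" and m: "0 < m" and x: "0 \<le> x"
  shows "log 2 (1 + c * x) \<le> log 2 (1 + c * m) + c / ((1 + c * m) * ln 2) * (x - m)"
proof -
  have pm: "0 < 1 + c * m" and px: "0 < 1 + c * x"
    using c m x by (simp_all add: add_pos_nonneg)
  have "ln ((1 + c * x) / (1 + c * m)) \<le> (1 + c * x) / (1 + c * m) - 1"
    using pm px by (intro ln_le_minus_one) simp
  then have "ln (1 + c * x) - ln (1 + c * m) \<le> c * (x - m) / (1 + c * m)"
    using pm px by (simp add: ln_div field_simps)
  then have "(ln (1 + c * x) - ln (1 + c * m)) / ln 2 \<le> c * (x - m) / (1 + c * m) / ln 2"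
    by (rule divide_right_mono) simp
  moreover have "c * (x - m) / (1 + c * m) / ln 2 = c / ((1 + c * m) * ln 2) * (x - m)"
    by (simp add: divide_divide_eq_left)
  moreover have "(ln (1 + c * x) - ln (1 + c * m)) / ln 2 = log 2 (1 + c * x) - log 2 (1 + c * m)"
    by (simp add: log_def diff_divide_distrib)
  ultimately show ?thesis
    by linarith
qed

lemma log2_tangent_intercept_nonneg:
  fixes c m :: real
  assumes c: "0 < c" and m: "0 < m"
  shows "0 \<le> log 2 (1 + c * m) - c / ((1 + c * m) * ln 2) * m"
  using log2_le_tangent[OF c m, of 0] by simp

lemma (in prob_space) nn_integral_le_sum_affine:
  fixes D :: "'i \<Rightarrow> 'a \<Rightarrow> real"
  assumes S: "finite S" and a: "0 \<le> a" and b: "0 \<le> b"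
    and D: "\<And>k. k \<in> S \<Longrightarrow> D k \<in> borel_measurable M" "\<And>k x. k \<in> S \<Longrightarrow> 0 \<le> D k x"
    and mean: "\<And>k. k \<in> S \<Longrightarrow> (\<integral>\<^sup>+ x. ennreal (D k x) \<partial>M) = ennreal m" and m: "0 \<le> m"
    and bound: "AE x in M. f x \<le> (\<Sum>k\<in>S. a + b * D k x)"
  shows "(\<integral>\<^sup>+ x. ennreal (f x) \<partial>M) \<le> ennreal (real (card S) * (a + b * m))"
proof -
  have "(\<integral>\<^sup>+ x. ennreal (f x) \<partial>M) \<le> (\<integral>\<^sup>+ x. (\<Sum>k\<in>S. ennreal a + ennreal b * ennreal (D k x)) \<partial>M)"
  proof (rule nn_integral_mono_AE)
    show "AE x in M. ennreal (f x) \<le> (\<Sum>k\<in>S. ennreal a + ennreal b * ennreal (D k x))"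
      using bound
    proof eventually_elim
      case (elim x)
      then have "ennreal (f x) \<le> ennreal (\<Sum>k\<in>S. a + b * D k x)"
        by (rule ennreal_leI)
      also have "\<dots> = (\<Sum>k\<in>S. ennreal (a + b * D k x))"
        using a b D(2) by (subst sum_ennreal) auto
      also have "\<dots> = (\<Sum>k\<in>S. ennreal a + ennreal b * ennreal (D k x))"
        using a b D(2) by (intro sum.cong refl) (simp add: ennreal_mult)
      finally show ?case .
    qed
  qed
  also have "\<dots> = (\<Sum>k\<in>S. ennreal a + ennreal b * ennreal m)"
    using D(1) by (simp add: nn_integral_sum nn_integral_add nn_integral_cmult emeasure_space_1 mean distrib_left)
  also have "\<dots> = ennreal (real (card S) * (a + b * m))"
    using a b m by (simp add: ennreal_mult ennreal_plus ennreal_of_nat_eq_real_of_nat)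
  finally show ?thesis .
qed

lemma rate_le_tangent_residual:
  assumes k: "k < K" and KM: "K \<le> M" and d: "det (leading_block K h) \<noteq> 0" and P: "0 < P"
  defines "c \<equiv> P / real K" and "m \<equiv> real M - real K + 1"
  defines "b \<equiv> c / ((1 + c * m) * ln 2)"
  shows "log 2 (1 + P / (real K * vec_norm_sq (col (zf_precoder (channel_mat K M h)) k)))
           \<le> (log 2 (1 + c * m) - b * m) + b * residual_norm_sq K M k h"
proof -
  let ?v = "vec_norm_sq (col (zf_precoder (channel_mat K M h)) k)" and ?D = "residual_norm_sq K M k h"
  have "0 \<le> ?v" "0 \<le> ?D"
    unfolding vec_norm_sq_def residual_norm_sq_def by (simp_all add: sum_nonneg)
  moreover have one: "1 \<le> ?D * ?v"
    by (rule one_le_residual_norm_sq_mult_zf_norm_sq[OF k KM d])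
  ultimately have "0 < ?v"
    by (cases "?v = 0") auto
  moreover from this one have "1 / ?v \<le> ?D"
    by (simp add: field_simps)
  ultimately have "0 < ?v" "P / (real K * ?v) \<le> c * ?D"
    using P k by (simp_all add: c_def field_simps)
  then have "log 2 (1 + P / (real K * ?v)) \<le> log 2 (1 + c * ?D)"
    using P k \<open>0 \<le> ?D\<close> by (subst log_le_cancel_iff) (auto simp: c_def intro: add_pos_nonneg)
  also have "\<dots> \<le> log 2 (1 + c * m) + b * (?D - m)"
    unfolding b_def using P k KM \<open>0 \<le> ?D\<close> by (intro log2_le_tangent) (simp_all add: c_def m_def)
  also have "\<dots> = (log 2 (1 + c * m) - b * m) + b * ?D"
    by (simp add: algebra_simps)
  finally show ?thesis .
qed

theorem mainTheorem3:
  fixes K M :: nat and P :: real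
  assumes "0 < K" and "K \<le> M" and "0 < P"
  shows "(\<integral>\<^sup>+ h. ennreal (\<Sum>k<K. log 2 (1 + P / (real K *
              vec_norm_sq (col (zf_precoder (channel_mat K M h)) k))))
          \<partial>channel_measure K M)
         \<le> ennreal (real K * log 2 (1 + P * (real M - real K + 1) / real K))"
proof -
  interpret prob_space "channel_measure K M"
    unfolding channel_measure_def by (intro prob_space_PiM prob_space_complex_gaussian)
  define c where "c = P / real K"
  define m where "m = real M - real K + 1"
  define b where "b = c / ((1 + c * m) * ln 2)"
  have c: "0 < c" and m: "0 < m" and b: "0 \<le> b"
    using assms by (simp_all add: c_def m_def b_def add_pos_nonneg)
  have bound: "AE h in channel_measure K M.
          (\<Sum>k<K. log 2 (1 + P / (real K * vec_norm_sq (col (zf_precoder (channel_mat K M h)) k))))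
            \<le> (\<Sum>k<K. (log 2 (1 + c * m) - b * m) + b * residual_norm_sq K M k h)"
    using AE_det_leading_block_nonzero[OF order_refl assms(2)] unfolding b_def c_def m_def
    by eventually_elim (intro sum_mono rate_le_tangent_residual assms(2,3), simp_all)
  have measurable: "residual_norm_sq K M k \<in> borel_measurable (channel_measure K M)" if "k \<in> {..<K}" for k
    using that by (intro borel_measurable_residual_norm_sq) simp
  have mean: "(\<integral>\<^sup>+ h. ennreal (residual_norm_sq K M k h) \<partial>channel_measure K M) = ennreal m"
    if "k \<in> {..<K}" for k
    using that assms(2) unfolding m_def by (intro nn_integral_residual_norm_sq) simp_all
  have "(\<integral>\<^sup>+ h. ennreal (\<Sum>k<K. log 2 (1 + P / (real K *
          vec_norm_sq (col (zf_precoder (channel_mat K M h)) k)))) \<partial>channel_measure K M)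
          \<le> ennreal (real (card {..<K}) * ((log 2 (1 + c * m) - b * m) + b * m))"
    by (rule nn_integral_le_sum_affine[OF finite_lessThan log2_tangent_intercept_nonneg[OF c m, folded b_def]
          b measurable _ mean _ bound]) (use m in \<open>simp_all add: residual_norm_sq_def sum_nonneg\<close>)
  then show ?thesis
    by (simp add: c_def m_def)
qed

end
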